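(* Let $A$ be a set and $n\in\mathbb{N}$. The following are equivalent: (a) For every centraliser clone $F$ on $A$ we have $F=F^{(n)**}$. (b) For every centraliser clone $F$ we have $F^{(n)*}=F^*$. (c) For every centraliser clone $F$ we have $F^{(n)*(n)*}=F$. (d) For every centraliser clone $F$ there is some $G\subseteq\bigcup_{\ell\leq n}\mathrm{Op}^{(\ell)}(A)$ with $F=G^*$. (e) For every centraliser clone $F$ there is some $G\subseteq\mathrm{Op}^{(n)}(A)$ with $F=G^*$. (f) For every set $F\subseteq\mathrm{Op}(A)$ we have $F^{*(n)*}=F^{**}$. (g) For every centraliser clone $F$ we have $F^{*(n)*}=F$.
   Context: $\mathrm{Op}(A)$ is the set of all finitary operations $A^m\to A$ with $m\geq 1$ (nullary operations excluded), and $\mathrm{Op}^{(\ell)}(A)$ the set of $\ell$-ary ones. For $F\subseteq\mathrm{Op}(A)$, $F^{(n)}$ denotes the set of $n$-ary members of $F$. An $m$-ary $g$ commutes with an $n$-ary $h$ if $g\bigl((h((x_{ij})_{j}))_{i}\bigr)=h\bigl((g((x_{ij})_{i}))_{j}\bigr)$ for all $(x_{ij})\in A^{m\times n}$; $F^*$ (the centraliser of $F$) is the set of all $g\in\mathrm{Op}(A)$ commuting with every member of $F$. Superscript operators are applied from left to right, e.g. $F^{(n)*(n)*}=((((F^{(n)})^* )^{(n)})^* )$ and $F^{*(n)*}=((F^* )^{(n)})^*$. A centraliser clone is a set $F\subseteq\mathrm{Op}(A)$ with $F^{**}=F$. *)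

theory Defs
  imports "HOL-Library.FuncSet"
begin

text \<open>An operation is a pair (m, f) of its arity m and an extensional function f
  on m-tuples over A (tuples are extensional functions on {..<m}).\<close>

type_synonym 'a operation = "nat \<times> ((nat \<Rightarrow> 'a) \<Rightarrow> 'a)"

definition Ops :: "'a set \<Rightarrow> 'a operation set" where
  "Ops A = {(m, f). 1 \<le> m \<and> f \<in> (PiE {..<m} (\<lambda>_. A)) \<rightarrow>\<^sub>E A}"

definition Ops_ar :: "'a set \<Rightarrow> nat \<Rightarrow> 'a operation set" where
  "Ops_ar A l = {g \<in> Ops A. fst g = l}"

definition arity_part :: "'a operation set \<Rightarrow> nat \<Rightarrow> 'a operation set" where
  "arity_part F n = {g \<in> F. fst g = n}"

definition commutes :: "'a set \<Rightarrow> 'a operation \<Rightarrow> 'a operation \<Rightarrow> bool" where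
  "commutes A g h = (case g of (m, g') \<Rightarrow> case h of (n, h') \<Rightarrow>
     (\<forall>x :: nat \<Rightarrow> nat \<Rightarrow> 'a. (\<forall>i<m. \<forall>j<n. x i j \<in> A) \<longrightarrow>
        g' (\<lambda>i\<in>{..<m}. h' (\<lambda>j\<in>{..<n}. x i j))
      = h' (\<lambda>j\<in>{..<n}. g' (\<lambda>i\<in>{..<m}. x i j))))"

definition centraliser :: "'a set \<Rightarrow> 'a operation set \<Rightarrow> 'a operation set" where
  "centraliser A F = {g \<in> Ops A. \<forall>h\<in>F. commutes A g h}"

definition centraliser_clone :: "'a set \<Rightarrow> 'a operation set \<Rightarrow> bool" where
  "centraliser_clone A F \<longleftrightarrow> F \<subseteq> Ops A \<and> centraliser A (centraliser A F) = F"

end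

theory Submission
  imports Defs
begin

text \<open>Centralisation is a Galois connection on sets of operations, so the centraliser clones
  are exactly the centralisers, and F \<mapsto> F* is an involution on them; conditions (a), (b),
  (f) and (g) are rewritings of one another. Passing from arities at most n to arity exactly n
  costs nothing: adding dummy arguments does not change which operations commute with a given
  one. Finally, if F = G* with G n-ary, then G \<subseteq> F*(n), whence F*(n)* \<subseteq> G* = F \<subseteq> F*(n)*.\<close>

lemma commutes_sym: "commutes A g h \<longleftrightarrow> commutes A h g"
proof -
  have transpose: "commutes A (m, g') (k, h') \<Longrightarrow> commutes A (k, h') (m, g')" for m g' k h'
    unfolding commutes_def prod.case
  proof (intro allI impI)
    fix x :: "nat \<Rightarrow> nat \<Rightarrow> 'a"
    assume "\<forall>x. (\<forall>i<m. \<forall>j<k. x i j \<in> A) \<longrightarrow>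
              g' (\<lambda>i\<in>{..<m}. h' (\<lambda>j\<in>{..<k}. x i j)) = h' (\<lambda>j\<in>{..<k}. g' (\<lambda>i\<in>{..<m}. x i j))"
      and "\<forall>i<k. \<forall>j<m. x i j \<in> A"
    then show "h' (\<lambda>i\<in>{..<k}. g' (\<lambda>j\<in>{..<m}. x i j)) = g' (\<lambda>j\<in>{..<m}. h' (\<lambda>i\<in>{..<k}. x i j))"
      by (auto dest: spec[where x = "\<lambda>i j. x j i"])
  qed
  show ?thesis
    by (cases g, cases h) (metis transpose)
qed

lemma centraliser_antimono: "X \<subseteq> Y \<Longrightarrow> centraliser A Y \<subseteq> centraliser A X"
  unfolding centraliser_def by blast

lemma centraliser_subset_Ops: "centraliser A X \<subseteq> Ops A"
  unfolding centraliser_def by blast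

lemma subset_centraliser_centraliser: "X \<subseteq> Ops A \<Longrightarrow> X \<subseteq> centraliser A (centraliser A X)"
  unfolding centraliser_def using commutes_sym by blast

lemma centraliser_centraliser_centraliser:
  assumes "X \<subseteq> Ops A"
  shows "centraliser A (centraliser A (centraliser A X)) = centraliser A X"
proof
  show "centraliser A (centraliser A (centraliser A X)) \<subseteq> centraliser A X"
    using assms by (intro centraliser_antimono subset_centraliser_centraliser)
  show "centraliser A X \<subseteq> centraliser A (centraliser A (centraliser A X))"
    by (intro subset_centraliser_centraliser centraliser_subset_Ops)
qed

lemma centraliser_clone_centraliser: "X \<subseteq> Ops A \<Longrightarrow> centraliser_clone A (centraliser A X)"
  unfolding centraliser_clone_def by (simp add: centraliser_centraliser_centraliser centraliser_subset_Ops)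

lemma centraliser_clone_iff: "centraliser_clone A F \<longleftrightarrow> (\<exists>X \<subseteq> Ops A. F = centraliser A X)"
  using centraliser_clone_centraliser unfolding centraliser_clone_def by (metis centraliser_subset_Ops)

lemma all_centraliser_clone_iff_all_centraliser:
  "(\<forall>F. centraliser_clone A F \<longrightarrow> P F) \<longleftrightarrow> (\<forall>X. X \<subseteq> Ops A \<longrightarrow> P (centraliser A X))"
  unfolding centraliser_clone_iff by blast

lemma all_centraliser_clone_centraliser_iff:
  "(\<forall>F. centraliser_clone A F \<longrightarrow> P (centraliser A F)) \<longleftrightarrow> (\<forall>F. centraliser_clone A F \<longrightarrow> P F)"
proof -
  have "centraliser_clone A (centraliser A F)" if "centraliser_clone A F" for F
    using that centraliser_clone_centraliser unfolding centraliser_clone_def by blast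
  then show ?thesis
    unfolding centraliser_clone_def by metis
qed

lemma centraliser_clone_eq_centraliser_centraliser_iff:
  assumes "centraliser_clone A F" "X \<subseteq> Ops A"
  shows "F = centraliser A (centraliser A X) \<longleftrightarrow> centraliser A X = centraliser A F"
  using assms centraliser_centraliser_centraliser unfolding centraliser_clone_def by metis

lemma arity_part_subset: "arity_part F n \<subseteq> F"
  unfolding arity_part_def by blast

lemma arity_part_centraliser_subset_Ops_ar: "arity_part (centraliser A X) n \<subseteq> Ops_ar A n"
  unfolding arity_part_def Ops_ar_def using centraliser_subset_Ops by blast

lemma centraliser_arity_part_centraliser_centraliser:
  assumes "G \<subseteq> Ops_ar A n"
  shows "centraliser A (arity_part (centraliser A (centraliser A G)) n) = centraliser A G"
proof
  have "G \<subseteq> Ops A" using assms unfolding Ops_ar_def by blast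
  then have "G \<subseteq> arity_part (centraliser A (centraliser A G)) n"
    using assms subset_centraliser_centraliser unfolding arity_part_def Ops_ar_def by blast
  then show "centraliser A (arity_part (centraliser A (centraliser A G)) n) \<subseteq> centraliser A G"
    by (rule centraliser_antimono)
  have "centraliser A G = centraliser A (centraliser A (centraliser A G))"
    using \<open>G \<subseteq> Ops A\<close> by (simp add: centraliser_centraliser_centraliser)
  also have "\<dots> \<subseteq> centraliser A (arity_part (centraliser A (centraliser A G)) n)"
    by (intro centraliser_antimono arity_part_subset)
  finally show "centraliser A G \<subseteq> centraliser A (arity_part (centraliser A (centraliser A G)) n)" .
qed

definition pad :: "'a set \<Rightarrow> nat \<Rightarrow> 'a operation \<Rightarrow> 'a operation" where
  "pad A n g = (n, \<lambda>x\<in>PiE {..<n} (\<lambda>_. A). snd g (restrict x {..<fst g}))"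

lemma pad_in_Ops_ar:
  assumes "(l, g') \<in> Ops A" "l \<le> n"
  shows "pad A n (l, g') \<in> Ops_ar A n"
proof -
  have "g' (restrict x {..<l}) \<in> A" if "x \<in> PiE {..<n} (\<lambda>_. A)" for x
  proof -
    have "g' \<in> PiE {..<l} (\<lambda>_. A) \<rightarrow>\<^sub>E A"
      using assms(1) by (simp add: Ops_def)
    moreover have "restrict x {..<l} \<in> PiE {..<l} (\<lambda>_. A)"
      using that assms(2) by (auto simp: PiE_iff)
    ultimately show ?thesis
      by (rule PiE_mem)
  qed
  with assms show ?thesis
    by (auto simp: pad_def Ops_def Ops_ar_def)
qed

lemma commutes_pad_iff:
  assumes g: "(l, g') \<in> Ops A" "l \<le> n" and h: "(m, h') \<in> Ops A"
  shows "commutes A (pad A n (l, g')) (m, h') \<longleftrightarrow> commutes A (l, g') (m, h')"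
proof -
  define p where "p = snd (pad A n (l, g'))"
  have pad: "pad A n (l, g') = (n, p)"
    unfolding p_def pad_def by simp
  have top_rows: "{..<n} \<inter> {..<l} = {..<l}"
    using g(2) by auto
  have p_apply: "p x = g' (restrict x {..<l})" if "x \<in> PiE {..<n} (\<lambda>_. A)" for x
    using that unfolding p_def pad_def by (simp add: top_rows)
  have l: "1 \<le> l" and m: "1 \<le> m" and h': "h' \<in> PiE {..<m} (\<lambda>_. A) \<rightarrow>\<^sub>E A"
    using g h by (auto simp: Ops_def)
  have padded_law_iff: "p (\<lambda>i\<in>{..<n}. h' (\<lambda>j\<in>{..<m}. y i j)) = h' (\<lambda>j\<in>{..<m}. p (\<lambda>i\<in>{..<n}. y i j))
      \<longleftrightarrow> g' (\<lambda>i\<in>{..<l}. h' (\<lambda>j\<in>{..<m}. y i j)) = h' (\<lambda>j\<in>{..<m}. g' (\<lambda>i\<in>{..<l}. y i j))"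
    if y: "\<forall>i<n. \<forall>j<m. y i j \<in> A" for y
  proof -
    have "(\<lambda>i\<in>{..<n}. h' (\<lambda>j\<in>{..<m}. y i j)) \<in> PiE {..<n} (\<lambda>_. A)"
      using h' y by (auto simp: PiE_iff)
    moreover have "(\<lambda>j\<in>{..<m}. p (\<lambda>i\<in>{..<n}. y i j)) = (\<lambda>j\<in>{..<m}. g' (\<lambda>i\<in>{..<l}. y i j))"
      using y by (intro restrict_ext) (simp add: p_apply top_rows)
    ultimately show ?thesis
      by (simp add: p_apply top_rows)
  qed
  show ?thesis
  proof
    assume pad_commutes: "commutes A (pad A n (l, g')) (m, h')"
    show "commutes A (l, g') (m, h')"
      unfolding commutes_def prod.case
    proof (intro allI impI)
      fix x :: "nat \<Rightarrow> nat \<Rightarrow> 'a"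
      assume x: "\<forall>i<l. \<forall>j<m. x i j \<in> A"
      \<comment> \<open>\<open>x 0 0 \<in> A\<close> as both arities are positive; it fills the dummy rows\<close>
      define y where "y i j = (if i < l then x i j else x 0 0)" for i j
      have y: "\<forall>i<n. \<forall>j<m. y i j \<in> A"
        using x l m unfolding y_def by auto
      have "(\<lambda>i\<in>{..<l}. h' (\<lambda>j\<in>{..<m}. y i j)) = (\<lambda>i\<in>{..<l}. h' (\<lambda>j\<in>{..<m}. x i j))"
           "(\<lambda>j\<in>{..<m}. g' (\<lambda>i\<in>{..<l}. y i j)) = (\<lambda>j\<in>{..<m}. g' (\<lambda>i\<in>{..<l}. x i j))"
        by (auto intro!: restrict_ext simp: y_def cong: restrict_cong)
      with padded_law_iff[OF y] pad_commutes y
      show "g' (\<lambda>i\<in>{..<l}. h' (\<lambda>j\<in>{..<m}. x i j)) = h' (\<lambda>j\<in>{..<m}. g' (\<lambda>i\<in>{..<l}. x i j))"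
        unfolding commutes_def pad by simp
    qed
  next
    assume "commutes A (l, g') (m, h')"
    with padded_law_iff g(2) show "commutes A (pad A n (l, g')) (m, h')"
      unfolding commutes_def pad by auto
  qed
qed

lemma centraliser_pad_image:
  assumes "G \<subseteq> (\<Union>l\<le>n. Ops_ar A l)"
  shows "centraliser A (pad A n ` G) = centraliser A G"
proof -
  have "commutes A y (pad A n g) \<longleftrightarrow> commutes A y g" if "g \<in> G" "y \<in> Ops A" for g y
  proof -
    have "g \<in> Ops A" "fst g \<le> n"
      using that(1) assms by (auto simp: Ops_ar_def)
    then obtain l g' where g: "g = (l, g')" "(l, g') \<in> Ops A" "l \<le> n"
      by (cases g) auto
    obtain m h' where "y = (m, h')"
      by (cases y)
    with g that(2) show ?thesis
      using commutes_pad_iff commutes_sym by metis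
  qed
  then show ?thesis
    unfolding centraliser_def by blast
qed

lemma pad_image_subset_Ops_ar:
  assumes "G \<subseteq> (\<Union>l\<le>n. Ops_ar A l)"
  shows "pad A n ` G \<subseteq> Ops_ar A n"
  using assms pad_in_Ops_ar unfolding Ops_ar_def by fastforce

theorem proposition2p1:
  fixes A :: "'a set" and n :: nat
  defines "a \<equiv> \<forall>F. centraliser_clone A F \<longrightarrow>
                 F = centraliser A (centraliser A (arity_part F n))"
      and "b \<equiv> \<forall>F. centraliser_clone A F \<longrightarrow>
                 centraliser A (arity_part F n) = centraliser A F"
      and "c \<equiv> \<forall>F. centraliser_clone A F \<longrightarrow>
                 centraliser A (arity_part (centraliser A (arity_part F n)) n) = F"
      and "d \<equiv> \<forall>F. centraliser_clone A F \<longrightarrow>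
                 (\<exists>G. G \<subseteq> (\<Union>l\<le>n. Ops_ar A l) \<and> F = centraliser A G)"
      and "e \<equiv> \<forall>F. centraliser_clone A F \<longrightarrow>
                 (\<exists>G. G \<subseteq> Ops_ar A n \<and> F = centraliser A G)"
      and "f \<equiv> \<forall>F. F \<subseteq> Ops A \<longrightarrow>
                 centraliser A (arity_part (centraliser A F) n) = centraliser A (centraliser A F)"
      and "g \<equiv> \<forall>F. centraliser_clone A F \<longrightarrow>
                 centraliser A (arity_part (centraliser A F) n) = F"
  shows "(a \<longleftrightarrow> b) \<and> (a \<longleftrightarrow> c) \<and> (a \<longleftrightarrow> d) \<and> (a \<longleftrightarrow> e)
       \<and> (a \<longleftrightarrow> f) \<and> (a \<longleftrightarrow> g)"
proof -
  have a_iff_b: "a \<longleftrightarrow> b"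
    unfolding a_def b_def
    using centraliser_clone_eq_centraliser_centraliser_iff arity_part_subset centraliser_clone_def
    by (metis subset_trans)
  have b_iff_f: "b \<longleftrightarrow> f"
    unfolding b_def f_def all_centraliser_clone_iff_all_centraliser ..
  have g_iff_b: "g \<longleftrightarrow> b"
  proof -
    have "g \<longleftrightarrow> (\<forall>F. centraliser_clone A F \<longrightarrow>
        centraliser A (arity_part (centraliser A F) n) = centraliser A (centraliser A F))"
      unfolding g_def centraliser_clone_def by auto
    also have "\<dots> \<longleftrightarrow> b"
      unfolding b_def by (rule all_centraliser_clone_centraliser_iff)
    finally show ?thesis .
  qed
  have b_g_imp_c: "b \<Longrightarrow> g \<Longrightarrow> c"
    unfolding b_def c_def g_def by simp
  have c_imp_e: "c \<Longrightarrow> e"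
    unfolding c_def e_def using arity_part_centraliser_subset_Ops_ar by metis
  have d_iff_e: "d \<longleftrightarrow> e"
  proof
    show "e \<Longrightarrow> d"
      unfolding d_def e_def by (meson UN_upper atMost_iff order_refl subset_trans)
    show "d \<Longrightarrow> e"
      unfolding d_def e_def by (metis centraliser_pad_image pad_image_subset_Ops_ar)
  qed
  have e_imp_g: "e \<Longrightarrow> g"
    unfolding e_def g_def using centraliser_arity_part_centraliser_centraliser by metis
  show ?thesis
    using a_iff_b b_iff_f g_iff_b b_g_imp_c c_imp_e d_iff_e e_imp_g by blast
qed

end
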